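(* Let $\Lambda$ be a lattice and $B\subset\Lambda$ a finite subset. Then $B$ has an integral decomposition $B=\bigcup_i B_i$ in which every $B_i$ is irreducible, and this decomposition is unique up to the order of the factors.
   Context: A lattice is a free abelian group of finite rank. For a subset $A\subseteq\Lambda$, $\langle A\rangle_{\mathbb Z}$ denotes the subgroup generated by $A$ and $\langle A\rangle_{\mathbb C}$ the complex subspace of $\Lambda\otimes_{\mathbb Z}\mathbb C$ it spans. The completion of a subgroup $\Delta\subseteq\Lambda$ is $\overline{\Delta}=\langle\Delta\rangle_{\mathbb C}\cap\Lambda$. An integral decomposition of a finite set $B\subset\Lambda$ is a partition $B=\bigcup_i B_i$ (into nonempty parts) such that $\overline{\langle B\rangle_{\mathbb Z}}=\bigoplus_i\overline{\langle B_i\rangle_{\mathbb Z}}$ (internal direct sum). $B$ is irreducible if it has no nontrivial integral decomposition. *)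

theory Defs
  imports "HOL-Analysis.Analysis"
begin

text \<open>The lattice Lambda is modelled as int^n (n an arbitrary finite index type);
  Lambda tensor C is then complex^n.\<close>

definition zspan :: "(int ^ 'n) set \<Rightarrow> (int ^ 'n) set" where
  "zspan A = module.span (*s) A"

definition cembed :: "int ^ 'n \<Rightarrow> complex ^ 'n" where
  "cembed x = (\<chi> i. of_int (x $ i))"

definition cspan :: "(int ^ 'n) set \<Rightarrow> (complex ^ 'n) set" where
  "cspan A = module.span (*s) (cembed ` A)"

definition completion :: "(int ^ 'n) set \<Rightarrow> (int ^ 'n) set" where
  "completion D = {x. cembed x \<in> cspan D}"

definition is_partition :: "(int ^ 'n) set \<Rightarrow> (int ^ 'n) set set \<Rightarrow> bool" where
  "is_partition B P \<longleftrightarrow> \<Union>P = B \<and> {} \<notin> P \<and>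
     (\<forall>C\<in>P. \<forall>D\<in>P. C \<noteq> D \<longrightarrow> C \<inter> D = {})"

definition internal_direct_sum ::
  "(int ^ 'n) set \<Rightarrow> 'i set \<Rightarrow> ('i \<Rightarrow> (int ^ 'n) set) \<Rightarrow> bool" where
  "internal_direct_sum L P D \<longleftrightarrow>
     L = {(\<Sum>C\<in>P. f C) | f. \<forall>C\<in>P. f C \<in> D C} \<and>
     (\<forall>f. (\<forall>C\<in>P. f C \<in> D C) \<and> (\<Sum>C\<in>P. f C) = 0 \<longrightarrow> (\<forall>C\<in>P. f C = 0))"

definition integral_decomposition :: "(int ^ 'n) set \<Rightarrow> (int ^ 'n) set set \<Rightarrow> bool" where
  "integral_decomposition B P \<longleftrightarrow> is_partition B P \<and>
     internal_direct_sum (completion (zspan B)) P (\<lambda>C. completion (zspan C))"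

definition irreducible_set :: "(int ^ 'n) set \<Rightarrow> bool" where
  "irreducible_set B \<longleftrightarrow> (\<forall>P. integral_decomposition B P \<longrightarrow> card P \<le> 1)"

end

theory Submission
  imports Defs
begin

text \<open>An element of \<open>\<langle>C\<rangle>\<^sub>\<complex> \<inter> \<Lambda>\<close> has a nonzero multiple in \<open>\<langle>C\<rangle>\<^sub>\<int>\<close>. Using this, if
  \<open>B = \<Union> B\<^sub>i\<close> is an integral decomposition and \<open>C \<subseteq> B\<close>, the nonempty traces \<open>C \<inter> B\<^sub>i\<close>
  form an integral decomposition of \<open>C\<close>; so an irreducible part of one decomposition lies inside a
  part of any other, which gives uniqueness. For existence, refining one part of an integral
  decomposition by an integral decomposition of that part is again integral, so a decomposition
  with the maximal number of parts has irreducible parts.\<close>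

interpretation ivec: module "(*s) :: int \<Rightarrow> int^'n \<Rightarrow> int^'n"
  by standard (simp_all add: vec_eq_iff algebra_simps)

lemma zspan_eq_span: "zspan A = ivec.span A"
  unfolding zspan_def by simp

lemma cembed_nth [simp]: "cembed x $ i = of_int (x $ i)"
  by (simp add: cembed_def)

lemma cembed_add: "cembed (x + y) = cembed x + cembed y"
  by (simp add: vec_eq_iff)

lemma cembed_diff: "cembed (x - y) = cembed x - cembed y"
  by (simp add: vec_eq_iff)

lemma cembed_scale: "cembed (k *s x) = (of_int k :: complex) *s cembed x"
  by (simp add: vec_eq_iff)

lemma cembed_eq_iff: "cembed x = cembed y \<longleftrightarrow> x = y"
  by (simp add: vec_eq_iff)

lemma cembed_zero [simp]: "cembed 0 = 0"
  by (simp add: vec_eq_iff)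

lemma cembed_eq_0_iff [simp]: "cembed x = 0 \<longleftrightarrow> x = 0"
  by (simp add: vec_eq_iff)

lemma cembed_sum: "cembed (sum f A) = (\<Sum>a\<in>A. cembed (f a))"
  by (induction A rule: infinite_finite_induct) (auto simp: cembed_add vec_eq_iff)

lemma mem_completion: "x \<in> completion C \<longleftrightarrow> cembed x \<in> vec.span (cembed ` C)"
  unfolding completion_def cspan_def by simp

lemma cembed_mem_span_if_zspan: "x \<in> zspan C \<Longrightarrow> cembed x \<in> vec.span (cembed ` C)"
  unfolding zspan_eq_span
proof (induction rule: ivec.span_induct_alt)
  case base
  then show ?case by (simp add: vec.span_zero)
next
  case (step c x y)
  then show ?case
    by (simp add: cembed_add cembed_scale vec.span_add vec.span_scale vec.span_base)
qed

lemma completion_zspan [simp]: "completion (zspan C) = completion C"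
proof -
  have "vec.span (cembed ` zspan C) = vec.span (cembed ` C)"
  proof
    show "vec.span (cembed ` zspan C) \<subseteq> vec.span (cembed ` C)"
      using cembed_mem_span_if_zspan by (intro vec.span_minimal) (auto simp: vec.subspace_span)
    show "vec.span (cembed ` C) \<subseteq> vec.span (cembed ` zspan C)"
      by (intro vec.span_mono image_mono) (simp add: zspan_eq_span ivec.span_superset)
  qed
  then show ?thesis
    by (simp add: set_eq_iff mem_completion)
qed

lemma zspan_subset_completion: "zspan C \<subseteq> completion C"
  using cembed_mem_span_if_zspan by (auto simp: mem_completion)

lemma completion_zero [simp]: "0 \<in> completion C"
  by (simp add: mem_completion vec.span_zero)

lemma completion_add: "x \<in> completion C \<Longrightarrow> y \<in> completion C \<Longrightarrow> x + y \<in> completion C"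
  by (simp add: mem_completion cembed_add vec.span_add)

lemma completion_diff: "x \<in> completion C \<Longrightarrow> y \<in> completion C \<Longrightarrow> x - y \<in> completion C"
  by (simp add: mem_completion cembed_diff vec.span_diff)

lemma completion_scale: "x \<in> completion C \<Longrightarrow> k *s x \<in> completion C"
  by (simp add: mem_completion cembed_scale vec.span_scale)

lemma completion_sum: "(\<And>a. a \<in> A \<Longrightarrow> f a \<in> completion C) \<Longrightarrow> sum f A \<in> completion C"
  by (induction A rule: infinite_finite_induct) (auto simp: completion_add)

lemma completion_mono: "C \<subseteq> D \<Longrightarrow> completion C \<subseteq> completion D"
  using vec.span_mono[of "cembed ` C" "cembed ` D"] by (auto simp: mem_completion image_mono)

lemma completion_empty [simp]: "completion {} = {0}"
  by (auto simp: mem_completion)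

lemma completion_scale_cancel:
  assumes "m \<noteq> 0" "m *s x \<in> completion C"
  shows "x \<in> completion C"
proof -
  have "inverse (of_int m :: complex) *s (of_int m *s cembed x) \<in> vec.span (cembed ` C)"
    using assms(2) vec.span_scale[of "of_int m *s cembed x" "cembed ` C" "inverse (of_int m)"]
    by (simp add: mem_completion cembed_scale)
  then show ?thesis
    using assms(1) by (simp add: mem_completion vec.scale_scale)
qed

subsection \<open>Completions are rational\<close>

definition rat_scale :: "rat \<Rightarrow> complex \<Rightarrow> complex" where
  "rat_scale r z = of_rat r * z"

interpretation qvec: vector_space rat_scale
  by standard (simp_all add: rat_scale_def algebra_simps of_rat_add of_rat_mult)

interpretation qvec_pair: vector_space_pair rat_scale rat_scale ..

lemma ex_rational_retraction:
  "\<exists>g :: complex \<Rightarrow> complex. (\<forall>a b. g (a + b) = g a + g b) \<and>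
     (\<forall>r z. g (of_rat r * z) = of_rat r * g z) \<and> g 1 = 1 \<and> (\<forall>z. g z \<in> \<rat>)"
proof -
  have "qvec.independent {1 :: complex}"
    using qvec.independent_insertI[of 1 "{}"] qvec.span_empty by (simp add: qvec.independent_empty)
  then obtain g where lin: "Vector_Spaces.linear rat_scale rat_scale g"
    and g1: "\<forall>x\<in>{1}. g x = id x" and range_g: "range g = qvec.span (id ` {1})"
    using qvec_pair.linear_independent_extend_subspace[of "{1}" id] by blast
  have "g z \<in> \<rat>" for z
    using range_g by (auto simp: qvec.span_singleton rat_scale_def Rats_def)
  moreover have "\<forall>a b. g (a + b) = g a + g b" "\<forall>r z. g (of_rat r * z) = of_rat r * g z"
    using lin unfolding Vector_Spaces.linear_iff rat_scale_def by auto
  ultimately show ?thesis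
    using g1 by auto
qed

lemma ex_common_denominator:
  fixes S :: "complex set"
  assumes "finite S" "S \<subseteq> \<rat>"
  shows "\<exists>m::int. m > 0 \<and> (\<forall>s\<in>S. of_int m * s \<in> \<int>)"
  using assms
proof (induction S rule: finite_induct)
  case empty
  then show ?case by (intro exI[of _ 1]) auto
next
  case (insert q S)
  then obtain m :: int where m: "m > 0" "\<forall>s\<in>S. of_int m * s \<in> \<int>"
    by auto
  obtain a b :: int where ab: "b > 0" "q = of_int a / of_int b"
    using insert(4) Rats_cases' by (metis insert_subset)
  have "of_int (m * b) * q \<in> \<int>"
    using ab by simp
  moreover have "of_int (m * b) * s \<in> \<int>" if "s \<in> S" for s
    using m(2) that Ints_mult[OF Ints_of_int[of b]] by (simp add: mult.assoc mult.left_commute)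
  ultimately show ?case
    using m(1) ab(1) by (intro exI[of _ "m * b"]) auto
qed

text \<open>Applying a \<open>\<rat>\<close>-linear retraction \<open>\<complex> \<rightarrow> \<rat>\<close> to the coefficients of a complex combination
  of integer vectors keeps the integer coordinates fixed.\<close>

lemma completion_rational_combination:
  assumes "finite C" "x \<in> completion C"
  obtains a where "\<And>c. c \<in> C \<Longrightarrow> a c \<in> \<rat>" "cembed x = (\<Sum>c\<in>C. a c *s cembed c)"
proof -
  obtain g :: "complex \<Rightarrow> complex" where g_add: "\<And>a b. g (a + b) = g a + g b"
    and g_scale: "\<And>r z. g (of_rat r * z) = of_rat r * g z" and g1: "g 1 = 1"
    and g_Rats: "\<And>z. g z \<in> \<rat>"
    using ex_rational_retraction by blast
  have g_int: "g (of_int k * z) = of_int k * g z" for k z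
    using g_scale[of "of_int k" z] by simp
  have g_sum: "g (sum f A) = (\<Sum>a\<in>A. g (f a))" for f :: "'b \<Rightarrow> complex" and A
    using g_add[of 0 0] by (induction A rule: infinite_finite_induct) (auto simp: g_add)
  obtain u where u: "cembed x = (\<Sum>v\<in>cembed ` C. u v *s v)"
    using assms vec.span_finite[of "cembed ` C"] by (auto simp: mem_completion)
  have "inj_on cembed C"
    by (auto simp: inj_on_def cembed_eq_iff)
  then have x_eq: "cembed x = (\<Sum>c\<in>C. u (cembed c) *s cembed c)"
    using u by (simp add: sum.reindex)
  have rational_eq: "cembed x = (\<Sum>c\<in>C. g (u (cembed c)) *s cembed c)"
  proof (subst vec_eq_iff, intro allI)
    fix i
    have "of_int (x $ i) = (\<Sum>c\<in>C. of_int (c $ i) * u (cembed c))"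
      using arg_cong[OF x_eq, of "\<lambda>v. v $ i"] by (simp add: mult.commute)
    then have "g (of_int (x $ i) * 1) = (\<Sum>c\<in>C. of_int (c $ i) * g (u (cembed c)))"
      by (simp add: g_sum g_int)
    then show "cembed x $ i = (\<Sum>c\<in>C. g (u (cembed c)) *s cembed c) $ i"
      using g1 g_int[of "x $ i" 1] by (simp add: mult.commute)
  qed
  show ?thesis
    using g_Rats rational_eq by (rule that)
qed

lemma completion_multiple_in_zspan:
  assumes "finite C" "x \<in> completion C"
  obtains m :: int where "m > 0" "m *s x \<in> zspan C"
proof -
  obtain a where a_Rats: "\<And>c. c \<in> C \<Longrightarrow> a c \<in> \<rat>"
    and x_eq: "cembed x = (\<Sum>c\<in>C. a c *s cembed c)"
    using completion_rational_combination[OF assms] by blast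
  obtain m :: int where m: "m > 0" "\<forall>s\<in>a ` C. of_int m * s \<in> \<int>"
    using ex_common_denominator[of "a ` C"] assms(1) a_Rats by auto
  define k where "k c = (SOME j. of_int m * a c = (of_int j :: complex))" for c
  have k: "of_int m * a c = of_int (k c)" if "c \<in> C" for c
  proof -
    have "of_int m * a c \<in> \<int>"
      using m(2) that by blast
    then obtain j where "of_int m * a c = of_int j"
      by (rule Ints_cases)
    then show ?thesis
      unfolding k_def by (rule someI)
  qed
  have "cembed (m *s x) = (\<Sum>c\<in>C. (of_int m * a c) *s cembed c)"
    by (simp add: cembed_scale x_eq vec.scale_sum_right vec.scale_scale)
  also have "\<dots> = cembed (\<Sum>c\<in>C. k c *s c)"
    by (simp add: cembed_sum cembed_scale k)
  finally have "m *s x = (\<Sum>c\<in>C. k c *s c)"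
    by (simp only: cembed_eq_iff)
  also have "\<dots> \<in> zspan C"
    unfolding zspan_eq_span by (intro ivec.span_sum ivec.span_scale ivec.span_base)
  finally show ?thesis
    using m(1) that by blast
qed

subsection \<open>Internal direct sums\<close>

lemma internal_direct_sumD:
  assumes "internal_direct_sum L P D"
  shows internal_direct_sum_span: "L = {(\<Sum>C\<in>P. f C) | f. \<forall>C\<in>P. f C \<in> D C}"
    and internal_direct_sum_indep:
      "\<And>f. \<forall>C\<in>P. f C \<in> D C \<Longrightarrow> (\<Sum>C\<in>P. f C) = 0 \<Longrightarrow> \<forall>C\<in>P. f C = 0"
  using assms unfolding internal_direct_sum_def by blast+

lemma internal_direct_sum_refine:
  assumes sum_P: "internal_direct_sum L P D" and C: "C \<in> P"
    and sum_Q: "internal_direct_sum (D C) Q D"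
    and fin: "finite P" "finite Q" and disj: "(P - {C}) \<inter> Q = {}"
  shows "internal_direct_sum L (P - {C} \<union> Q) D"
proof -
  let ?N = "P - {C} \<union> Q"
  note span_P = internal_direct_sum_span[OF sum_P] and indep_P = internal_direct_sum_indep[OF sum_P]
  note span_Q = internal_direct_sum_span[OF sum_Q] and indep_Q = internal_direct_sum_indep[OF sum_Q]
  have split_N: "(\<Sum>E\<in>?N. h E) = (\<Sum>E\<in>P - {C}. h E) + (\<Sum>E\<in>Q. h E)" for h
    using fin disj by (simp add: sum.union_disjoint)
  have split_P: "(\<Sum>E\<in>P. h E) = h C + (\<Sum>E\<in>P - {C}. h E)" for h
    using fin C by (simp add: sum.remove)
  have merge_Q: "(\<Sum>E\<in>Q. h E) \<in> D C" if "\<forall>E\<in>Q. h E \<in> D E" for h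
    using that by (subst span_Q) blast
  have "L = {(\<Sum>E\<in>?N. h E) | h. \<forall>E\<in>?N. h E \<in> D E}"
  proof (intro equalityI subsetI)
    fix x assume "x \<in> L"
    then obtain f where f: "\<forall>E\<in>P. f E \<in> D E" and x: "x = (\<Sum>E\<in>P. f E)"
      using span_P by blast
    then have "f C \<in> D C"
      using C by blast
    then obtain g where g: "\<forall>E\<in>Q. g E \<in> D E" and f_C: "f C = (\<Sum>E\<in>Q. g E)"
      using span_Q by blast
    define h where "h E = (if E \<in> Q then g E else f E)" for E
    have "(\<Sum>E\<in>P - {C}. h E) = (\<Sum>E\<in>P - {C}. f E)"
      using disj by (intro sum.cong) (auto simp: h_def)
    then have "x = (\<Sum>E\<in>?N. h E)"
      by (simp add: x split_P split_N f_C h_def)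
    moreover have "\<forall>E\<in>?N. h E \<in> D E"
      using f g by (auto simp: h_def)
    ultimately show "x \<in> {(\<Sum>E\<in>?N. h E) | h. \<forall>E\<in>?N. h E \<in> D E}"
      by blast
  next
    fix x assume "x \<in> {(\<Sum>E\<in>?N. h E) | h. \<forall>E\<in>?N. h E \<in> D E}"
    then obtain h where h: "\<forall>E\<in>?N. h E \<in> D E" and x: "x = (\<Sum>E\<in>?N. h E)"
      by blast
    define f where "f E = (if E = C then (\<Sum>E\<in>Q. h E) else h E)" for E
    have "\<forall>E\<in>P. f E \<in> D E"
      using h merge_Q[of h] by (auto simp: f_def)
    then have "(\<Sum>E\<in>P. f E) \<in> L"
      by (subst span_P) blast
    moreover have "(\<Sum>E\<in>P. f E) = x"
      by (simp add: x split_P split_N f_def)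
    ultimately show "x \<in> L"
      by simp
  qed
  moreover have "\<forall>E\<in>?N. h E = 0" if h: "\<forall>E\<in>?N. h E \<in> D E" and h0: "(\<Sum>E\<in>?N. h E) = 0" for h
  proof -
    define f where "f E = (if E = C then (\<Sum>E\<in>Q. h E) else h E)" for E
    have "\<forall>E\<in>P. f E \<in> D E"
      using h merge_Q[of h] by (auto simp: f_def)
    moreover have "(\<Sum>E\<in>P. f E) = 0"
      using h0 by (simp add: split_P split_N f_def add.commute)
    ultimately have f0: "\<forall>E\<in>P. f E = 0"
      by (rule indep_P)
    then have "(\<Sum>E\<in>Q. h E) = 0"
      using C by (auto simp: f_def)
    then have "\<forall>E\<in>Q. h E = 0"
      using h by (intro indep_Q) auto
    moreover have "\<forall>E\<in>P - {C}. h E = 0"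
      using f0 unfolding f_def by (metis DiffE singletonI)
    ultimately show ?thesis
      by blast
  qed
  ultimately show ?thesis
    unfolding internal_direct_sum_def by blast
qed

lemma internal_direct_sum_drop_trivial:
  fixes D :: "'i \<Rightarrow> (int ^ 'n) set"
  assumes sum_Q: "internal_direct_sum L Q D" and fin: "finite Q" and sub: "Q' \<subseteq> Q"
    and trivial: "\<And>E. E \<in> Q - Q' \<Longrightarrow> D E = {0}"
  shows "internal_direct_sum L Q' D"
proof -
  note span_Q = internal_direct_sum_span[OF sum_Q] and indep_Q = internal_direct_sum_indep[OF sum_Q]
  have sum_eq: "(\<Sum>E\<in>Q. f E) = (\<Sum>E\<in>Q'. f E)" if "\<forall>E\<in>Q - Q'. f E = 0" for f
    using fin sub that by (intro sum.mono_neutral_right) auto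
  define ext where "ext f E = (if E \<in> Q' then f E else 0)" for f :: "'i \<Rightarrow> int ^ 'n" and E
  have ext: "\<forall>E\<in>Q. ext f E \<in> D E" if "\<forall>E\<in>Q'. f E \<in> D E" for f
    using that trivial by (auto simp: ext_def)
  have sum_ext: "(\<Sum>E\<in>Q. ext f E) = (\<Sum>E\<in>Q'. f E)" for f
    by (subst sum_eq) (auto simp: ext_def)
  have "L = {(\<Sum>E\<in>Q'. f E) | f. \<forall>E\<in>Q'. f E \<in> D E}"
  proof (intro equalityI subsetI)
    fix x assume "x \<in> L"
    then obtain f where f: "\<forall>E\<in>Q. f E \<in> D E" and x: "x = (\<Sum>E\<in>Q. f E)"
      using span_Q by blast
    then have "x = (\<Sum>E\<in>Q'. f E)"
      using trivial by (subst sum_eq[symmetric]) auto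
    then show "x \<in> {(\<Sum>E\<in>Q'. f E) | f. \<forall>E\<in>Q'. f E \<in> D E}"
      using f sub by blast
  next
    fix x assume "x \<in> {(\<Sum>E\<in>Q'. f E) | f. \<forall>E\<in>Q'. f E \<in> D E}"
    then obtain f where f: "\<forall>E\<in>Q'. f E \<in> D E" and x: "x = (\<Sum>E\<in>Q'. f E)"
      by blast
    have "(\<Sum>E\<in>Q. ext f E) \<in> L"
      using ext[OF f] by (subst span_Q) blast
    then show "x \<in> L"
      by (simp add: x sum_ext)
  qed
  moreover have "\<forall>E\<in>Q'. f E = 0" if "\<forall>E\<in>Q'. f E \<in> D E" "(\<Sum>E\<in>Q'. f E) = 0" for f
  proof -
    have "\<forall>E\<in>Q. ext f E = 0"
      using indep_Q[OF ext[OF that(1)]] that(2) sum_ext[of f] by simp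
    then show ?thesis
      using sub unfolding ext_def by (metis subsetD)
  qed
  ultimately show ?thesis
    unfolding internal_direct_sum_def by blast
qed

lemma internal_direct_sum_reindex:
  fixes D :: "'j \<Rightarrow> (int ^ 'n) set" and g :: "'i \<Rightarrow> 'j"
  assumes sum_Q: "internal_direct_sum L Q (D \<circ> g)" and inj: "inj_on g Q"
  shows "internal_direct_sum L (g ` Q) D"
proof -
  note span_Q = internal_direct_sum_span[OF sum_Q] and indep_Q = internal_direct_sum_indep[OF sum_Q]
  have sum_reindex: "(\<Sum>E\<in>g ` Q. f E) = (\<Sum>E\<in>Q. f (g E))" for f :: "'j \<Rightarrow> int ^ 'n"
    using inj by (simp add: sum.reindex)
  have "L = {(\<Sum>E\<in>g ` Q. f E) | f. \<forall>E\<in>g ` Q. f E \<in> D E}"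
  proof (intro equalityI subsetI)
    fix x assume "x \<in> L"
    then obtain f where f: "\<forall>E\<in>Q. f E \<in> D (g E)" and x: "x = (\<Sum>E\<in>Q. f E)"
      using span_Q by auto
    define f' where "f' = f \<circ> inv_into Q g"
    have "\<forall>E\<in>Q. f' (g E) = f E"
      using inj by (simp add: f'_def)
    then have "x = (\<Sum>E\<in>g ` Q. f' E)" and "\<forall>E\<in>g ` Q. f' E \<in> D E"
      using f by (simp_all add: x sum_reindex)
    then show "x \<in> {(\<Sum>E\<in>g ` Q. f E) | f. \<forall>E\<in>g ` Q. f E \<in> D E}"
      by blast
  next
    fix x assume "x \<in> {(\<Sum>E\<in>g ` Q. f E) | f. \<forall>E\<in>g ` Q. f E \<in> D E}"
    then obtain f where "\<forall>E\<in>g ` Q. f E \<in> D E" and "x = (\<Sum>E\<in>Q. f (g E))"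
      by (auto simp: sum_reindex)
    then show "x \<in> L"
      using span_Q by auto
  qed
  moreover have "\<forall>E\<in>g ` Q. f E = 0" if "\<forall>E\<in>g ` Q. f E \<in> D E" "(\<Sum>E\<in>g ` Q. f E) = 0" for f
    using indep_Q[of "f \<circ> g"] that by (simp add: sum_reindex)
  ultimately show ?thesis
    unfolding internal_direct_sum_def by blast
qed

lemma is_partition_subset_Pow: "is_partition B P \<Longrightarrow> P \<subseteq> Pow B"
  unfolding is_partition_def by auto

lemma is_partition_finite: "finite B \<Longrightarrow> is_partition B P \<Longrightarrow> finite P"
  using is_partition_subset_Pow finite_Pow_iff finite_subset by metis

lemma is_partition_refine:
  assumes P: "is_partition B P" and C: "C \<in> P" and Q: "is_partition C Q"
  shows "is_partition B (P - {C} \<union> Q)" and "(P - {C}) \<inter> Q = {}"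
proof -
  have P_parts: "\<Union>P = B" "{} \<notin> P" "\<And>D E. D \<in> P \<Longrightarrow> E \<in> P \<Longrightarrow> D \<noteq> E \<Longrightarrow> D \<inter> E = {}"
    using P unfolding is_partition_def by auto
  have Q_parts: "\<Union>Q = C" "{} \<notin> Q" "\<And>D E. D \<in> Q \<Longrightarrow> E \<in> Q \<Longrightarrow> D \<noteq> E \<Longrightarrow> D \<inter> E = {}"
    using Q unfolding is_partition_def by auto
  have disjoint_C: "D \<inter> E = {}" if "D \<in> P - {C}" "E \<in> Q" for D E
    using P_parts(3)[of D C] that C Q_parts(1) by auto
  show "(P - {C}) \<inter> Q = {}"
  proof (rule equals0I)
    fix E assume E: "E \<in> (P - {C}) \<inter> Q"
    then have "E = {}"
      using disjoint_C[of E E] by auto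
    then show False
      using Q_parts(2) E by auto
  qed
  show "is_partition B (P - {C} \<union> Q)"
    unfolding is_partition_def
  proof (intro conjI ballI impI)
    show "\<Union>(P - {C} \<union> Q) = B"
      using P_parts(1) Q_parts(1) C by auto
    show "{} \<notin> P - {C} \<union> Q"
      using P_parts(2) Q_parts(2) by auto
    fix D E assume D: "D \<in> P - {C} \<union> Q" and E: "E \<in> P - {C} \<union> Q" and "D \<noteq> E"
    then consider "D \<in> P" "E \<in> P" | "D \<in> Q" "E \<in> Q" | "D \<in> P - {C}" "E \<in> Q"
      | "E \<in> P - {C}" "D \<in> Q"
      by blast
    then show "D \<inter> E = {}"
    proof cases
      case 4
      then show ?thesis
        using disjoint_C[of E D] by (simp add: Int_commute)
    qed (use P_parts(3) Q_parts(3) disjoint_C \<open>D \<noteq> E\<close> in simp_all)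
  qed
qed

subsection \<open>Integral decompositions\<close>

lemma integral_decomposition_iff:
  "integral_decomposition B P \<longleftrightarrow>
     is_partition B P \<and> internal_direct_sum (completion B) P completion"
  by (simp add: integral_decomposition_def)

lemma integral_decomposition_finite:
  "finite B \<Longrightarrow> integral_decomposition B P \<Longrightarrow> finite P"
  using is_partition_finite integral_decomposition_iff by blast

lemma integral_decomposition_trivial:
  "integral_decomposition B (if B = {} then {} else {B})"
  by (auto simp: integral_decomposition_iff is_partition_def internal_direct_sum_def)

lemma integral_decomposition_refine:
  assumes "finite B" and P: "integral_decomposition B P" and C: "C \<in> P"
    and Q: "integral_decomposition C Q"
  shows "integral_decomposition B (P - {C} \<union> Q)"
proof -
  have "C \<subseteq> B"
    using P C by (auto simp: integral_decomposition_iff is_partition_def)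
  then have "finite Q"
    using Q \<open>finite B\<close> finite_subset integral_decomposition_finite by blast
  moreover have "finite P"
    using P \<open>finite B\<close> integral_decomposition_finite by blast
  moreover note P_parts = P[unfolded integral_decomposition_iff]
    and Q_parts = Q[unfolded integral_decomposition_iff]
  ultimately show ?thesis
    unfolding integral_decomposition_iff
    using is_partition_refine[of B P C Q] internal_direct_sum_refine[of "completion B" P completion C Q] C
    by blast
qed

text \<open>Some multiple \<open>m x\<close> is an integral combination of \<open>C\<close>; grouping its terms along the
  partition gives components of \<open>m x\<close> lying in \<open>\<langle>C \<inter> D\<rangle>\<^sub>\<int>\<close>, and uniqueness of components in the
  direct sum identifies them with the \<open>m f D\<close>.\<close>

lemma integral_decomposition_component_restrict:
  assumes "finite B" and Q: "integral_decomposition B Q" and "C \<subseteq> B"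
    and f: "\<forall>D\<in>Q. f D \<in> completion D" and x: "(\<Sum>D\<in>Q. f D) \<in> completion C"
    and D: "D \<in> Q"
  shows "f D \<in> completion (C \<inter> D)"
proof -
  have finite_C: "finite C"
    using \<open>finite B\<close> \<open>C \<subseteq> B\<close> finite_subset by blast
  have finite_Q: "finite Q"
    using \<open>finite B\<close> Q integral_decomposition_finite by blast
  have Q_parts: "\<Union>Q = B" "\<And>D E. D \<in> Q \<Longrightarrow> E \<in> Q \<Longrightarrow> D \<noteq> E \<Longrightarrow> D \<inter> E = {}"
    using Q unfolding integral_decomposition_iff is_partition_def by auto
  obtain m :: int where m: "m > 0" "m *s (\<Sum>D\<in>Q. f D) \<in> zspan C"
    using completion_multiple_in_zspan[OF finite_C x] by blast
  then obtain k where k: "m *s (\<Sum>D\<in>Q. f D) = (\<Sum>c\<in>C. k c *s c)"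
    using ivec.span_finite[OF finite_C] by (auto simp: zspan_eq_span)
  define h where "h E = (\<Sum>c\<in>C \<inter> E. k c *s c)" for E
  have h_zspan: "h E \<in> zspan (C \<inter> E)" for E
    unfolding h_def zspan_eq_span by (intro ivec.span_sum ivec.span_scale ivec.span_base) auto
  have "(\<Sum>E\<in>Q. h E) = (\<Sum>c\<in>(\<Union>E\<in>Q. C \<inter> E). k c *s c)"
    unfolding h_def using finite_Q finite_C Q_parts(2)
    by (intro sum.UNION_disjoint[symmetric]) auto
  also have "(\<Union>E\<in>Q. C \<inter> E) = C"
    using Q_parts(1) \<open>C \<subseteq> B\<close> by auto
  finally have h_sum: "(\<Sum>E\<in>Q. h E) = m *s (\<Sum>E\<in>Q. f E)"
    using k by simp
  have "\<forall>E\<in>Q. m *s f E - h E = 0"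
  proof (rule internal_direct_sum_indep)
    show "internal_direct_sum (completion B) Q completion"
      using Q by (simp add: integral_decomposition_iff)
    show "\<forall>E\<in>Q. m *s f E - h E \<in> completion E"
      using f h_zspan zspan_subset_completion completion_mono[of "C \<inter> _"]
      by (blast intro: completion_diff completion_scale)
    show "(\<Sum>E\<in>Q. m *s f E - h E) = 0"
      by (simp add: sum_subtractf h_sum ivec.scale_sum_right)
  qed
  then have "m *s f D \<in> completion (C \<inter> D)"
    using D h_zspan zspan_subset_completion by fastforce
  then show ?thesis
    using m(1) completion_scale_cancel by (metis less_irrefl)
qed

lemma integral_decomposition_restrict_direct_sum:
  assumes "finite B" and Q: "integral_decomposition B Q" and "C \<subseteq> B"
  shows "internal_direct_sum (completion C) Q (\<lambda>D. completion (C \<inter> D))"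
proof -
  have sum_Q: "internal_direct_sum (completion B) Q completion"
    using Q by (simp add: integral_decomposition_iff)
  note span_Q = internal_direct_sum_span[OF sum_Q] and indep_Q = internal_direct_sum_indep[OF sum_Q]
  have "completion C = {(\<Sum>D\<in>Q. f D) | f. \<forall>D\<in>Q. f D \<in> completion (C \<inter> D)}"
  proof (intro equalityI subsetI)
    fix x assume x: "x \<in> completion C"
    then have "x \<in> completion B"
      using completion_mono[OF \<open>C \<subseteq> B\<close>] by blast
    then obtain f where f: "\<forall>D\<in>Q. f D \<in> completion D" and x_eq: "x = (\<Sum>D\<in>Q. f D)"
      using span_Q by blast
    then have "\<forall>D\<in>Q. f D \<in> completion (C \<inter> D)"
      using integral_decomposition_component_restrict[OF assms f] x by blast
    then show "x \<in> {(\<Sum>D\<in>Q. f D) | f. \<forall>D\<in>Q. f D \<in> completion (C \<inter> D)}"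
      using x_eq by blast
  next
    fix x assume "x \<in> {(\<Sum>D\<in>Q. f D) | f. \<forall>D\<in>Q. f D \<in> completion (C \<inter> D)}"
    then show "x \<in> completion C"
      using completion_mono[of "C \<inter> _" C] by (blast intro: completion_sum)
  qed
  moreover have "\<forall>D\<in>Q. f D = 0"
    if "\<forall>D\<in>Q. f D \<in> completion (C \<inter> D)" "(\<Sum>D\<in>Q. f D) = 0" for f
    using that completion_mono[of "C \<inter> _"] by (intro indep_Q) blast+
  ultimately show ?thesis
    unfolding internal_direct_sum_def by blast
qed

lemma integral_decomposition_restrict:
  assumes "finite B" and Q: "integral_decomposition B Q" and "C \<subseteq> B"
  shows "integral_decomposition C {C \<inter> D | D. D \<in> Q \<and> C \<inter> D \<noteq> {}}"
proof -
  define Q' where "Q' = {D \<in> Q. C \<inter> D \<noteq> {}}"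
  have Q_parts: "\<Union>Q = B" "{} \<notin> Q" "\<And>D E. D \<in> Q \<Longrightarrow> E \<in> Q \<Longrightarrow> D \<noteq> E \<Longrightarrow> D \<inter> E = {}"
    using Q unfolding integral_decomposition_iff is_partition_def by auto
  have traces: "{C \<inter> D | D. D \<in> Q \<and> C \<inter> D \<noteq> {}} = (\<lambda>D. C \<inter> D) ` Q'"
    by (auto simp: Q'_def)
  have "inj_on (\<lambda>D. C \<inter> D) Q'"
    using Q_parts(3) by (auto simp: Q'_def inj_on_def)
  moreover have "internal_direct_sum (completion C) Q' (completion \<circ> (\<lambda>D. C \<inter> D))"
    unfolding comp_def
    by (rule internal_direct_sum_drop_trivial[OF integral_decomposition_restrict_direct_sum[OF assms]
          integral_decomposition_finite[OF \<open>finite B\<close> Q]]) (auto simp: Q'_def)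
  ultimately have "internal_direct_sum (completion C) ((\<lambda>D. C \<inter> D) ` Q') completion"
    by (rule internal_direct_sum_reindex[rotated])
  moreover have "is_partition C ((\<lambda>D. C \<inter> D) ` Q')"
    unfolding is_partition_def
  proof (intro conjI ballI impI)
    show "\<Union>((\<lambda>D. C \<inter> D) ` Q') = C"
      using Q_parts(1) \<open>C \<subseteq> B\<close> by (auto simp: Q'_def)
    show "{} \<notin> (\<lambda>D. C \<inter> D) ` Q'"
      by (auto simp: Q'_def)
    fix E E' assume "E \<in> (\<lambda>D. C \<inter> D) ` Q'" "E' \<in> (\<lambda>D. C \<inter> D) ` Q'" "E \<noteq> E'"
    then show "E \<inter> E' = {}"
      using Q_parts(3) by (auto simp: Q'_def)
  qed
  ultimately show ?thesis
    unfolding traces integral_decomposition_iff by blast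
qed

lemma irreducible_part_subset:
  assumes "finite B" and P: "integral_decomposition B P" and Q: "integral_decomposition B Q"
    and C: "C \<in> P" and irr: "irreducible_set C"
  obtains D where "D \<in> Q" "C \<subseteq> D"
proof -
  have "C \<subseteq> B" "C \<noteq> {}"
    using P C unfolding integral_decomposition_iff is_partition_def by auto
  define R where "R = {C \<inter> D | D. D \<in> Q \<and> C \<inter> D \<noteq> {}}"
  have R: "integral_decomposition C R"
    unfolding R_def using assms(1) Q \<open>C \<subseteq> B\<close> by (rule integral_decomposition_restrict)
  then have "card R \<le> 1"
    using irr unfolding irreducible_set_def by blast
  moreover have "\<Union>R = C"
    using R by (simp add: integral_decomposition_iff is_partition_def)
  moreover have "finite R"
    using integral_decomposition_finite[OF finite_subset[OF \<open>C \<subseteq> B\<close> \<open>finite B\<close>] R] .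
  moreover have "R \<noteq> {}"
    using \<open>\<Union>R = C\<close> \<open>C \<noteq> {}\<close> by auto
  ultimately have "card R = 1"
    by (simp add: le_Suc_eq card_eq_0_iff)
  then obtain E where "R = {E}"
    by (rule card_1_singletonE)
  with \<open>\<Union>R = C\<close> have "C \<in> R"
    by simp
  then obtain D where "D \<in> Q" "C = C \<inter> D"
    unfolding R_def by blast
  then show ?thesis
    using that by blast
qed

lemma irreducible_decomposition_unique:
  assumes "finite B"
    and P: "integral_decomposition B P" "\<forall>C\<in>P. irreducible_set C"
    and Q: "integral_decomposition B Q" "\<forall>C\<in>Q. irreducible_set C"
  shows "P = Q"
proof -
  have "X \<subseteq> Y"
    if X: "integral_decomposition B X" "\<forall>C\<in>X. irreducible_set C"
      and Y: "integral_decomposition B Y" "\<forall>C\<in>Y. irreducible_set C" for X Y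
  proof
    fix C assume C: "C \<in> X"
    then obtain D where D: "D \<in> Y" "C \<subseteq> D"
      using irreducible_part_subset[OF \<open>finite B\<close> X(1) Y(1)] X(2) by blast
    then obtain C' where C': "C' \<in> X" "D \<subseteq> C'"
      using irreducible_part_subset[OF \<open>finite B\<close> Y(1) X(1)] Y(2) by blast
    have "C \<noteq> {}" and X_disjoint: "\<forall>C\<in>X. \<forall>C'\<in>X. C \<noteq> C' \<longrightarrow> C \<inter> C' = {}"
      using X(1) C unfolding integral_decomposition_iff is_partition_def by auto
    moreover have "C \<subseteq> C'"
      using C' D by auto
    ultimately have "C \<inter> C' \<noteq> {}"
      by auto
    then have "C = C'"
      using X_disjoint C C'(1) by blast
    then show "C \<in> Y"
      using C' D by auto
  qed
  then show ?thesis
    using P Q by blast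
qed

lemma integral_decomposition_card_le:
  assumes "finite B" "integral_decomposition B Q"
  shows "card Q \<le> 2 ^ card B"
proof -
  have "Q \<subseteq> Pow B"
    using assms(2) is_partition_subset_Pow integral_decomposition_iff by blast
  then have "card Q \<le> card (Pow B)"
    using assms(1) by (intro card_mono) auto
  then show ?thesis
    using assms(1) by (simp add: card_Pow)
qed

lemma ex_irreducible_decomposition:
  assumes "finite B"
  shows "\<exists>P. integral_decomposition B P \<and> (\<forall>C\<in>P. irreducible_set C)"
proof -
  obtain P where P: "integral_decomposition B P"
    and P_max: "\<And>Q. integral_decomposition B Q \<Longrightarrow> card Q \<le> card P"
    using ex_has_greatest_nat[of "integral_decomposition B" _ card "2 ^ card B + 1"]
      integral_decomposition_trivial integral_decomposition_card_le[OF assms]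
    by (metis le_imp_less_Suc Suc_eq_plus1)
  have "irreducible_set C" if C: "C \<in> P" for C
    unfolding irreducible_set_def
  proof (intro allI impI leI notI)
    fix Q assume Q: "integral_decomposition C Q" and "1 < card Q"
    have "finite P" "finite Q"
      using \<open>1 < card Q\<close> P \<open>finite B\<close> integral_decomposition_finite by (auto intro: card_ge_0_finite)
    moreover have "(P - {C}) \<inter> Q = {}"
      using P Q C is_partition_refine(2) unfolding integral_decomposition_iff by blast
    ultimately have "card (P - {C} \<union> Q) = card P - 1 + card Q"
      using C by (simp add: card_Un_disjoint card_Diff_singleton)
    also have "\<dots> > card P"
      using C \<open>finite P\<close> \<open>1 < card Q\<close> card_gt_0_iff by fastforce
    finally show False
      using P_max[OF integral_decomposition_refine[OF \<open>finite B\<close> P C Q]] by simp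
  qed
  then show ?thesis
    using P by blast
qed

theorem lemma3p4:
  fixes B :: "(int ^ 'n) set"
  assumes "finite B"
  shows "\<exists>!P. integral_decomposition B P \<and> (\<forall>C\<in>P. irreducible_set C)"
  using irreducible_decomposition_unique[OF assms]
  by (intro ex_ex1I[OF ex_irreducible_decomposition[OF assms]]) blast

end
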